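(* For any $\boldsymbol k=(k_1,k_2)\in[-\pi,\pi]^2$ and $\theta\in[0,2\pi]$, $$\sin^2(2\theta)\sin^2(k_1)\sin^2(k_2)\le\det M(\boldsymbol k,\theta)\le 16\sin^2(2\theta).$$ In particular $F(\theta)$ is finite whenever $\sin(2\theta)\ne0$. The function $\theta\mapsto F(\theta)$ is periodic with period $\pi/2$, symmetric (i.e. $F(\theta)=F(\pi/2-\theta)$) and continuous on $(0,\pi/2)$, increasing on $(0,\pi/4)$ and decreasing on $(\pi/4,\pi/2)$. Its infimum is $-\infty$, attained exactly at $\theta\in\{0,\pi/2,\pi,3\pi/2\}$.
   Context: Fix $\beta,J>0$. For $\boldsymbol k=(k_1,k_2)\in[-\pi,\pi]^2$ and $\theta\in\mathbb R$ set $a_\pm=1\pm e^{-ik_1}$, $b_\pm=1\pm e^{-ik_2}$, $\rho=-\cos(2\theta)$ and let $M(\boldsymbol k,\theta)$ be $\frac12$ times the $4\times4$ matrix with rows $(|a_-|^2+|b_-|^2,\ \rho a_-a_+^*,\ \rho b_-b_+^*,\ 0)$, $(\rho a_-^*a_+,\ |a_+|^2+|b_-|^2,\ 0,\ \rho b_-b_+^* )$, $(\rho b_-^*b_+,\ 0,\ |a_-|^2+|b_+|^2,\ \rho a_-a_+^* )$, $(0,\ \rho b_-^*b_+,\ \rho a_-^*a_+,\ |a_+|^2+|b_+|^2)$. Define $F(\theta)=\frac12\log(\beta J)+\frac18\int_{[-\pi,\pi]^2}\frac{d\boldsymbol k}{(2\pi)^2}\log\det M(\boldsymbol k,\theta)$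 (with value $-\infty$ allowed). *)

theory Defs
  imports "HOL-Analysis.Analysis"
begin

definition Mmat :: "real \<times> real \<Rightarrow> real \<Rightarrow> complex^4^4" where
  "Mmat k \<theta> =
    (let k1 = fst k; k2 = snd k;
         am = 1 - cis (- k1); ap = 1 + cis (- k1);
         bm = 1 - cis (- k2); bp = 1 + cis (- k2);
         \<rho> = complex_of_real (- cos (2 * \<theta>));
         sq = (\<lambda>z. complex_of_real ((cmod z)^2));
         R :: complex^4^4 = vector [
           vector [sq am + sq bm, \<rho> * am * cnj ap, \<rho> * bm * cnj bp, 0],
           vector [\<rho> * cnj am * ap, sq ap + sq bm, 0, \<rho> * bm * cnj bp],
           vector [\<rho> * cnj bm * bp, 0, sq am + sq bp, \<rho> * am * cnj ap],
           vector [0, \<rho> * cnj bm * bp, \<rho> * cnj am * ap, sq ap + sq bp]]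
     in (\<chi> i j. R $ i $ j / 2))"

text \<open>log det M as an extended real; det M is real (M Hermitian) and nonnegative,
  a vanishing determinant gives log = -infinity.\<close>
definition logdetM :: "real \<times> real \<Rightarrow> real \<Rightarrow> ereal" where
  "logdetM k \<theta> = (if Re (det (Mmat k \<theta>)) > 0 then ereal (ln (Re (det (Mmat k \<theta>)))) else - \<infinity>)"

definition ext_set_integral :: "(real \<times> real) set \<Rightarrow> (real \<times> real \<Rightarrow> ereal) \<Rightarrow> ereal" where
  "ext_set_integral S f =
     enn2ereal (\<integral>\<^sup>+ x. e2ennreal (max 0 (f x)) * indicator S x \<partial>lborel)
   - enn2ereal (\<integral>\<^sup>+ x. e2ennreal (max 0 (- f x)) * indicator S x \<partial>lborel)"

definition Ffree :: "real \<Rightarrow> real \<Rightarrow> real \<Rightarrow> ereal" where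
  "Ffree \<beta> J \<theta> = ereal (ln (\<beta> * J) / 2)
     + ereal (1/8) * (ext_set_integral ({-pi..pi} \<times> {-pi..pi}) (\<lambda>k. logdetM k \<theta>) / ereal ((2*pi)^2))"

end

theory Submission
  imports Defs
begin

text \<open>Expanding the determinant gives \<open>det M = S (8p + 8q + S (p - q)\<^sup>2)\<close> with
  \<open>S = sin\<^sup>2(2\<theta>)\<close>, \<open>p = sin\<^sup>2 k\<^sub>1\<close>, \<open>q = sin\<^sup>2 k\<^sub>2\<close>, which yields the pointwise bounds.
  For \<open>S > 0\<close> the logarithm splits as \<open>ln S + ln (8p + 8q + S (p - q)\<^sup>2)\<close>; the second term is
  integrable, because near its zeros \<open>\<bar>ln (sin\<^sup>2 x)\<bar>\<close> is dominated by \<open>\<bar>x\<bar>\<^sup>-\<^sup>1\<^sup>/\<^sup>2\<close> up to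
  translation, and its integral is nondecreasing and Lipschitz in \<open>S\<close>. Hence \<open>F\<close> is a continuous, strictly increasing
  function of \<open>sin\<^sup>2(2\<theta>)\<close>, and \<open>-\<infinity>\<close> exactly where \<open>sin(2\<theta>) = 0\<close>.\<close>

lemma vector_4_nth [simp]:
  "(vector [x, y, z, w] :: ('a::zero)^4) $ 1 = x"
  "(vector [x, y, z, w] :: ('a::zero)^4) $ 2 = y"
  "(vector [x, y, z, w] :: ('a::zero)^4) $ 3 = z"
  "(vector [x, y, z, w] :: ('a::zero)^4) $ 4 = w"
  unfolding vector_def by simp_all

lemma det_4:
  "det (A::'a::comm_ring_1^4^4) =
   A$1$1*A$2$2*A$3$3*A$4$4 - A$1$1*A$2$2*A$3$4*A$4$3 - A$1$1*A$2$3*A$3$2*A$4$4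
 + A$1$1*A$2$3*A$3$4*A$4$2 + A$1$1*A$2$4*A$3$2*A$4$3 - A$1$1*A$2$4*A$3$3*A$4$2
 - A$1$2*A$2$1*A$3$3*A$4$4 + A$1$2*A$2$1*A$3$4*A$4$3 + A$1$2*A$2$3*A$3$1*A$4$4
 - A$1$2*A$2$3*A$3$4*A$4$1 - A$1$2*A$2$4*A$3$1*A$4$3 + A$1$2*A$2$4*A$3$3*A$4$1
 + A$1$3*A$2$1*A$3$2*A$4$4 - A$1$3*A$2$1*A$3$4*A$4$2 - A$1$3*A$2$2*A$3$1*A$4$4
 + A$1$3*A$2$2*A$3$4*A$4$1 + A$1$3*A$2$4*A$3$1*A$4$2 - A$1$3*A$2$4*A$3$2*A$4$1
 - A$1$4*A$2$1*A$3$2*A$4$3 + A$1$4*A$2$1*A$3$3*A$4$2 + A$1$4*A$2$2*A$3$1*A$4$3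
 - A$1$4*A$2$2*A$3$3*A$4$1 - A$1$4*A$2$3*A$3$1*A$4$2 + A$1$4*A$2$3*A$3$2*A$4$1"
proof -
  have "finite {2::4, 3, 4}" "1 \<notin> {2::4, 3, 4}"
    and "finite {3::4, 4}" "2 \<notin> {3::4, 4}"
    and "finite {4::4}" "3 \<notin> {4::4}" by auto
  note insert_perms = sum_over_permutations_insert[OF this(1,2)]
    sum_over_permutations_insert[OF this(3,4)] sum_over_permutations_insert[OF this(5,6)]
  show ?thesis
    unfolding det_def UNIV_4 insert_perms permutes_sing
    by (simp add: sign_swap_id permutation_swap_id permutation_compose sign_compose sign_id
        swap_id_eq algebra_simps)
qed

lemma cmod_1_minus_cis_sq: "(cmod (1 - cis x))^2 = 2 - 2 * cos x"
  using sin_cos_squared_add[of x] by (simp add: cmod_power2 power2_diff)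

lemma cmod_1_plus_cis_sq: "(cmod (1 + cis x))^2 = 2 + 2 * cos x"
  using sin_cos_squared_add[of x] by (simp add: cmod_power2 power2_sum)

lemma one_minus_cis_mult_cnj: "(1 - cis (- x)) * cnj (1 + cis (- x)) = \<i> * of_real (2 * sin x)"
  using sin_cos_squared_add[of x] by (simp add: complex_eq_iff algebra_simps power2_eq_square)

lemma cnj_one_minus_cis_mult: "cnj (1 - cis (- x)) * (1 + cis (- x)) = - \<i> * of_real (2 * sin x)"
  using sin_cos_squared_add[of x] by (simp add: complex_eq_iff algebra_simps power2_eq_square)

lemma Mmat_entries:
  fixes k1 k2 \<theta> :: real
  defines "r \<equiv> - cos (2*\<theta>)"
  shows
  "Mmat (k1,k2) \<theta> $1$1 = of_real (2 - cos k1 - cos k2)"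
  "Mmat (k1,k2) \<theta> $2$2 = of_real (2 + cos k1 - cos k2)"
  "Mmat (k1,k2) \<theta> $3$3 = of_real (2 - cos k1 + cos k2)"
  "Mmat (k1,k2) \<theta> $4$4 = of_real (2 + cos k1 + cos k2)"
  "Mmat (k1,k2) \<theta> $1$4 = 0" "Mmat (k1,k2) \<theta> $2$3 = 0"
  "Mmat (k1,k2) \<theta> $3$2 = 0" "Mmat (k1,k2) \<theta> $4$1 = 0"
  "Mmat (k1,k2) \<theta> $1$2 = \<i> * of_real (r * sin k1)"
  "Mmat (k1,k2) \<theta> $3$4 = \<i> * of_real (r * sin k1)"
  "Mmat (k1,k2) \<theta> $2$1 = - \<i> * of_real (r * sin k1)"
  "Mmat (k1,k2) \<theta> $4$3 = - \<i> * of_real (r * sin k1)"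
  "Mmat (k1,k2) \<theta> $1$3 = \<i> * of_real (r * sin k2)"
  "Mmat (k1,k2) \<theta> $2$4 = \<i> * of_real (r * sin k2)"
  "Mmat (k1,k2) \<theta> $3$1 = - \<i> * of_real (r * sin k2)"
  "Mmat (k1,k2) \<theta> $4$2 = - \<i> * of_real (r * sin k2)"
  unfolding Mmat_def Let_def fst_conv snd_conv cmod_1_minus_cis_sq cmod_1_plus_cis_sq mult.assoc
    one_minus_cis_mult_cnj cnj_one_minus_cis_mult vec_lambda_beta vector_4_nth r_def
  by (simp_all add: field_simps)

definition det_reduced :: "real \<Rightarrow> real \<Rightarrow> real \<Rightarrow> real" where
  "det_reduced s p q = 8 * p + 8 * q + s * (p - q)^2"

lemma det_Mmat:
  fixes k1 k2 \<theta> :: real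
  defines "S \<equiv> (sin (2*\<theta>))^2"
  shows "det (Mmat (k1,k2) \<theta>) = of_real (S * det_reduced S ((sin k1)^2) ((sin k2)^2))"
proof -
  define r c1 c2 s1 s2 where "r = - cos (2*\<theta>)" and "c1 = cos k1" and "c2 = cos k2"
    and "s1 = sin k1" and "s2 = sin k2"
  have pythagoras: "c1^2 + s1^2 = 1" "c2^2 + s2^2 = 1" "r^2 + S = 1"
    by (simp_all add: c1_def s1_def c2_def s2_def r_def S_def)
  have "det (Mmat (k1,k2) \<theta>) = of_real ((2 - c1 - c2)*(2 + c1 - c2)*(2 - c1 + c2)*(2 + c1 + c2)
     - (r * s1)^2 * ((2 - c1 - c2)*(2 + c1 - c2) + (2 - c1 + c2)*(2 + c1 + c2))
     - (r * s2)^2 * ((2 - c1 - c2)*(2 - c1 + c2) + (2 + c1 - c2)*(2 + c1 + c2))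
     + ((r * s1)^2 - (r * s2)^2)^2)"
    unfolding det_4 Mmat_entries r_def[symmetric] c1_def[symmetric] c2_def[symmetric]
      s1_def[symmetric] s2_def[symmetric]
    by (simp add: complex_eq_iff power2_eq_square algebra_simps)
  also have "\<dots> = of_real (S * det_reduced S (s1^2) (s2^2))"
    using pythagoras unfolding det_reduced_def by (simp only: of_real_eq_iff) algebra
  finally show ?thesis by (simp add: s1_def s2_def)
qed

lemma det_reduced_ge: "0 \<le> s \<Longrightarrow> 8 * p + 8 * q \<le> det_reduced s p q"
  unfolding det_reduced_def by simp

lemma sq_diff_le_abs_diff:
  fixes p q :: real
  assumes "p \<in> {0..1}" "q \<in> {0..1}"
  shows "(p - q)^2 \<le> \<bar>p - q\<bar>"
proof -
  have "\<bar>p - q\<bar> * \<bar>p - q\<bar> \<le> \<bar>p - q\<bar>"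
    using assms by (intro mult_right_le_one_le) auto
  then show ?thesis by (simp add: power2_eq_square)
qed

lemma det_reduced_le_16:
  assumes "s \<in> {0..1}" "p \<in> {0..1}" "q \<in> {0..1}"
  shows "det_reduced s p q \<le> 16"
proof -
  have "s * (p - q)^2 \<le> (p - q)^2"
    using assms(1) by (simp add: mult_left_le_one_le)
  then show ?thesis
    using sq_diff_le_abs_diff[OF assms(2,3)] assms(2,3) unfolding det_reduced_def by auto
qed

lemma abs_ln_det_reduced_le:
  assumes "s \<in> {0..1}" "p \<in> {0..1}" "q \<in> {0..1}"
  shows "\<bar>ln (det_reduced s p q)\<bar> \<le> 15 + \<bar>ln p\<bar> + \<bar>ln q\<bar>"
proof (cases "p = 0 \<and> q = 0")
  case True
  then show ?thesis by (simp add: det_reduced_def)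
next
  case False
  have ge: "8 * p + 8 * q \<le> det_reduced s p q"
    using assms(1) by (simp add: det_reduced_ge)
  then have pos: "0 < det_reduced s p q"
    using False assms(2,3) by auto
  have "ln (det_reduced s p q) \<le> 15"
    using ln_le_minus_one[OF pos] det_reduced_le_16[OF assms] by linarith
  moreover have "ln p \<le> ln (det_reduced s p q) \<or> ln q \<le> ln (det_reduced s p q)"
    using False assms(2,3) ge by auto
  ultimately show ?thesis by linarith
qed

lemma ln_det_reduced_increment:
  assumes "0 \<le> s" "s \<le> s'" "p \<in> {0..1}" "q \<in> {0..1}"
  shows "ln (det_reduced s p q) \<le> ln (det_reduced s' p q)"
    and "ln (det_reduced s' p q) \<le> ln (det_reduced s p q) + (s' - s) / 4"
proof -
  have D_le: "det_reduced s p q \<le> det_reduced s' p q"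
    using assms(2) unfolding det_reduced_def by (simp add: mult_right_mono)
  have "ln (det_reduced s p q) \<le> ln (det_reduced s' p q)
      \<and> ln (det_reduced s' p q) \<le> ln (det_reduced s p q) + (s' - s) / 4"
  proof (cases "p = 0 \<and> q = 0")
    case True
    then show ?thesis using assms(2) by (simp add: det_reduced_def)
  next
    case False
    define D where "D = det_reduced s p q"
    have D_ge: "8 * p + 8 * q \<le> D"
      unfolding D_def using assms(1) by (rule det_reduced_ge)
    then have D_pos: "0 < D"
      using False assms(3,4) by auto
    text \<open>\<open>(p - q)\<^sup>2 \<le> \<bar>p - q\<bar> \<le> p + q \<le> D / 8\<close>\<close>
    have "4 * (p - q)^2 \<le> D"
      using D_ge sq_diff_le_abs_diff[OF assms(3,4)] assms(3,4) by auto
    then have "(s' - s) * (p - q)^2 \<le> (s' - s) * (D / 4)"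
      using assms(2) by (intro mult_left_mono) auto
    have "ln (det_reduced s' p q) - ln D \<le> det_reduced s' p q / D - 1"
      using D_pos D_le ln_le_minus_one[of "det_reduced s' p q / D"]
      by (simp add: D_def ln_div)
    also have "\<dots> = (s' - s) * (p - q)^2 / D"
      using D_pos by (simp add: field_simps D_def det_reduced_def)
    also have "\<dots> \<le> (s' - s) / 4"
      using D_pos \<open>(s' - s) * (p - q)^2 \<le> (s' - s) * (D / 4)\<close> by (simp add: pos_divide_le_eq)
    finally have "ln (det_reduced s' p q) - ln D \<le> (s' - s) / 4" .
    moreover have "ln D \<le> ln (det_reduced s' p q)"
      using D_pos D_le by (simp add: D_def)
    ultimately show ?thesis
      unfolding D_def[symmetric] by linarith
  qed
  then show "ln (det_reduced s p q) \<le> ln (det_reduced s' p q)"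
    and "ln (det_reduced s' p q) \<le> ln (det_reduced s p q) + (s' - s) / 4"
    by blast+
qed

lemma sin_sq_le_1: "(sin x)^2 \<le> (1::real)"
  by (simp add: abs_square_le_1)

lemma det_Mmat_bounds:
  fixes k1 k2 \<theta> :: real
  shows "Im (det (Mmat (k1, k2) \<theta>)) = 0"
    and "(sin (2*\<theta>))^2 * (sin k1)^2 * (sin k2)^2 \<le> Re (det (Mmat (k1, k2) \<theta>))"
    and "Re (det (Mmat (k1, k2) \<theta>)) \<le> 16 * (sin (2*\<theta>))^2"
proof -
  define S p q where "S = (sin (2*\<theta>))^2" and "p = (sin k1)^2" and "q = (sin k2)^2"
  have ranges: "S \<in> {0..1}" "p \<in> {0..1}" "q \<in> {0..1}"
    by (simp_all add: S_def p_def q_def sin_sq_le_1)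
  have det: "det (Mmat (k1, k2) \<theta>) = of_real (S * det_reduced S p q)"
    unfolding S_def p_def q_def by (rule det_Mmat)
  show "Im (det (Mmat (k1, k2) \<theta>)) = 0"
    by (simp add: det)
  have "p * q \<le> det_reduced S p q"
    using det_reduced_ge[of S p q] ranges by (auto intro: order_trans[OF mult_left_le_one_le])
  then have "S * (p * q) \<le> S * det_reduced S p q"
    using ranges by (intro mult_left_mono) auto
  then show "(sin (2*\<theta>))^2 * (sin k1)^2 * (sin k2)^2 \<le> Re (det (Mmat (k1, k2) \<theta>))"
    by (simp add: det S_def p_def q_def mult.assoc)
  show "Re (det (Mmat (k1, k2) \<theta>)) \<le> 16 * (sin (2*\<theta>))^2"
  proof -
    have "S * det_reduced S p q \<le> S * 16"
      using det_reduced_le_16[OF ranges] ranges by (intro mult_left_mono) auto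
    then show ?thesis by (simp add: det S_def mult.commute)
  qed
qed

lemma sin_ge_half_self:
  fixes y :: real
  assumes "0 \<le> y" "y \<le> 1"
  shows "y / 2 \<le> sin y"
proof -
  have "(\<lambda>t. sin t - t / 2) 0 \<le> (\<lambda>t. sin t - t / 2) y"
  proof (rule DERIV_nonneg_imp_nondecreasing[OF assms(1)])
    fix t :: real
    assume t: "0 \<le> t" "t \<le> y"
    text \<open>\<open>cos t = 1 - 2 sin\<^sup>2(t/2) \<ge> 1 - t\<^sup>2/2 \<ge> 1/2\<close>\<close>
    have "(sin (t/2))^2 \<le> (t/2)^2"
      by (metis abs_le_square_iff abs_sin_x_le_abs_x)
    moreover have "t^2 \<le> 1"
      using t assms by (intro power_le_one) auto
    ultimately have "1/2 \<le> cos t"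
      using cos_double_sin[of "t/2"] by (simp add: power_divide)
    moreover have "DERIV (\<lambda>t. sin t - t / 2) t :> cos t - 1/2"
      by (auto intro!: derivative_eq_intros)
    ultimately show "\<exists>d. DERIV (\<lambda>t. sin t - t / 2) t :> d \<and> 0 \<le> d"
      by (intro exI[of _ "cos t - 1/2"]) simp
  qed
  then show ?thesis by simp
qed

lemma sin_ge_half:
  fixes y :: real
  assumes "1 \<le> y" "y \<le> pi - 1"
  shows "1/2 \<le> sin y"
proof -
  have "1/2 \<le> sin (1::real)"
    using sin_ge_half_self[of 1] by simp
  moreover have "sin 1 \<le> sin y"
  proof (cases "y \<le> pi/2")
    case True
    then show ?thesis using assms pi_gt3 by (intro sin_monotone_2pi_le) auto
  next
    case False
    have "sin 1 \<le> sin (pi - y)" using assms False pi_gt3 by (intro sin_monotone_2pi_le) auto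
    then show ?thesis by simp
  qed
  ultimately show ?thesis by linarith
qed

lemma abs_ln_square_le:
  fixes t y :: real
  assumes "0 < t" "t / 2 \<le> \<bar>y\<bar>" "\<bar>y\<bar> \<le> 1"
  shows "\<bar>ln (y^2)\<bar> \<le> 2 * ln 2 + 4 * t powr (-1/2)"
proof -
  have "\<bar>t/2\<bar> \<le> \<bar>y\<bar>"
    using assms(1,2) by simp
  then have y2: "(t/2)^2 \<le> y^2" "y^2 \<le> 1"
    using assms(3) by (simp_all only: abs_le_square_iff abs_square_le_1)
  have "0 < (t/2)^2"
    using assms(1) by simp
  with y2(1) have y2_pos: "0 < y^2" by linarith
  have "2 * ln t - 2 * ln 2 = ln ((t/2)^2)"
    using assms(1) by (simp add: ln_realpow ln_div)
  also have "\<dots> \<le> ln (y^2)"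
    using assms(1) y2(1) by (intro ln_mono) auto
  finally have lower: "2 * ln t - 2 * ln 2 \<le> ln (y^2)" .
  have "- ln t / 2 = ln (t powr (-1/2))"
    using assms(1) by (simp add: ln_powr)
  also have "\<dots> \<le> t powr (-1/2) - 1"
    using assms(1) by (intro ln_le_minus_one) simp
  finally have "- ln t \<le> 2 * t powr (-1/2)" by simp
  moreover have "ln (y^2) \<le> 0"
    using y2_pos y2(2) by simp
  ultimately show ?thesis
    using lower by linarith
qed

text \<open>Shifted and reflected, this majorizes the logarithmic singularities of \<open>ln (sin\<^sup>2 x)\<close>
  at \<open>0\<close> and \<open>\<plusminus>pi\<close>.\<close>

definition inv_sqrt_0pi :: "real \<Rightarrow> real" where
  "inv_sqrt_0pi x = indicator {0..pi} x * x powr (-1/2)"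

lemma inv_sqrt_0pi_nonneg: "0 \<le> inv_sqrt_0pi x"
  by (simp add: inv_sqrt_0pi_def indicator_def)

lemma integrable_inv_sqrt_0pi: "integrable lborel inv_sqrt_0pi"
proof -
  have "(\<lambda>x::real. x powr (-1/2)) integrable_on {0..pi}"
    by (rule integrable_on_powr_from_0) auto
  then have "(\<lambda>x::real. x powr (-1/2)) absolutely_integrable_on {0..pi}"
    by (rule nonnegative_absolutely_integrable_1) auto
  then have "integrable lborel (\<lambda>x. indicator {0..pi} x *\<^sub>R (x::real) powr (-1/2))"
    by (simp add: set_integrable_def integrable_completion)
  then show ?thesis
    by (simp add: inv_sqrt_0pi_def[abs_def])
qed

lemma abs_ln_sin_sq_le:
  fixes y :: real
  assumes "0 \<le> y" "y \<le> pi"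
  shows "\<bar>ln ((sin y)^2)\<bar> \<le> 2 * ln 2 + 4 + 4 * inv_sqrt_0pi y + 4 * inv_sqrt_0pi (pi - y)"
proof -
  have nonneg: "0 \<le> inv_sqrt_0pi y" "0 \<le> inv_sqrt_0pi (pi - y)" "0 \<le> ln (2::real)"
    by (simp_all add: inv_sqrt_0pi_nonneg)
  have sin_le: "\<bar>sin y\<bar> \<le> 1" by simp
  consider "y = 0 \<or> y = pi" | "0 < y" "y \<le> 1" | "1 \<le> y" "y \<le> pi - 1" | "pi - 1 < y" "y < pi"
    using assms by linarith
  then show ?thesis
  proof cases
    case 1
    then show ?thesis using nonneg by auto
  next
    case 2
    then have "\<bar>ln ((sin y)^2)\<bar> \<le> 2 * ln 2 + 4 * inv_sqrt_0pi y"
      using abs_ln_square_le[of y "sin y"] sin_ge_half_self[of y] sin_le pi_gt3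
      by (simp add: inv_sqrt_0pi_def)
    then show ?thesis using nonneg by linarith
  next
    case 3
    then have "\<bar>ln ((sin y)^2)\<bar> \<le> 2 * ln 2 + 4"
      using abs_ln_square_le[of 1 "sin y"] sin_ge_half[of y] sin_le by simp
    then show ?thesis using nonneg by linarith
  next
    case 4
    then have "\<bar>ln ((sin y)^2)\<bar> \<le> 2 * ln 2 + 4 * inv_sqrt_0pi (pi - y)"
      using abs_ln_square_le[of "pi - y" "sin y"] sin_ge_half_self[of "pi - y"] sin_le pi_gt3
      by (simp add: inv_sqrt_0pi_def)
    then show ?thesis using nonneg by linarith
  qed
qed

lemma integrable_abs_ln_sin_sq:
  "integrable lborel (\<lambda>x. indicator {-pi..pi} x * \<bar>ln ((sin x)^2)\<bar>)"
proof (rule Bochner_Integration.integrable_bound)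
  let ?B = "\<lambda>x. indicator {-pi..pi} x * (2 * ln 2 + 4) + 4 * inv_sqrt_0pi x
    + 4 * inv_sqrt_0pi (-x) + 4 * inv_sqrt_0pi (pi - x) + 4 * inv_sqrt_0pi (pi + x)"
  have affine: "integrable lborel (\<lambda>x. inv_sqrt_0pi (t + c * x))" if "c \<noteq> 0" for t c :: real
    using lborel_integrable_real_affine_iff[OF that, of inv_sqrt_0pi t] integrable_inv_sqrt_0pi
    by simp
  show "integrable lborel ?B"
    using affine[of "-1" 0] affine[of "-1" pi] affine[of 1 pi]
    by (intro Bochner_Integration.integrable_add integrable_mult_right integrable_inv_sqrt_0pi) auto
  show "(\<lambda>x. indicator {-pi..pi} x * \<bar>ln ((sin x)^2)\<bar>) \<in> borel_measurable lborel"
    by measurable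
  show "AE x in lborel. norm (indicator {-pi..pi} x * \<bar>ln ((sin x)^2)\<bar>) \<le> norm (?B x)"
  proof (rule AE_I2)
    fix x :: real
    have nonneg: "0 \<le> inv_sqrt_0pi x" "0 \<le> inv_sqrt_0pi (-x)"
      "0 \<le> inv_sqrt_0pi (pi - x)" "0 \<le> inv_sqrt_0pi (pi + x)" "0 \<le> ln (2::real)"
      by (simp_all add: inv_sqrt_0pi_nonneg)
    text \<open>\<open>sin\<^sup>2 x = sin\<^sup>2 \<bar>x\<bar>\<close> reduces the bound to \<open>[0, pi]\<close>.\<close>
    have "\<bar>ln ((sin x)^2)\<bar> \<le> 2 * ln 2 + 4 + 4 * inv_sqrt_0pi x + 4 * inv_sqrt_0pi (-x)
        + 4 * inv_sqrt_0pi (pi - x) + 4 * inv_sqrt_0pi (pi + x)" if "x \<in> {-pi..pi}"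
    proof (cases "0 \<le> x")
      case True
      then show ?thesis using that abs_ln_sin_sq_le[of x] nonneg by auto
    next
      case False
      then show ?thesis using that abs_ln_sin_sq_le[of "-x"] nonneg by auto
    qed
    then show "norm (indicator {-pi..pi} x * \<bar>ln ((sin x)^2)\<bar>) \<le> norm (?B x)"
      using nonneg by (auto simp: indicator_def)
  qed
qed

lemma (in pair_sigma_finite) integrable_product_mult:
  fixes f :: "'a \<Rightarrow> real" and g :: "'b \<Rightarrow> real"
  assumes f: "integrable M1 f" and g: "integrable M2 g"
  shows "integrable (M1 \<Otimes>\<^sub>M M2) (\<lambda>x. f (fst x) * g (snd x))"
proof (rule Fubini_integrable)
  note [measurable] = borel_measurable_integrable[OF f] borel_measurable_integrable[OF g]
  show "(\<lambda>x. f (fst x) * g (snd x)) \<in> borel_measurable (M1 \<Otimes>\<^sub>M M2)"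
    by measurable
  have "(\<lambda>x. \<integral> y. norm (f (fst (x, y)) * g (snd (x, y))) \<partial>M2) = (\<lambda>x. norm (f x) * (\<integral> y. norm (g y) \<partial>M2))"
    by (simp add: abs_mult)
  then show "integrable M1 (\<lambda>x. \<integral> y. norm (f (fst (x, y)) * g (snd (x, y))) \<partial>M2)"
    using f by (simp add: integrable_mult_left)
  show "AE x in M1. integrable M2 (\<lambda>y. f (fst (x, y)) * g (snd (x, y)))"
    using g by (simp add: integrable_mult_right)
qed

lemma ext_set_integral_eq_integral:
  fixes h :: "real \<times> real \<Rightarrow> real"
  assumes int: "integrable lborel (\<lambda>k. indicator S k * h k)"
    and eq: "AE k in lborel. k \<in> S \<longrightarrow> F k = ereal (h k)"
  shows "ext_set_integral S F = ereal (\<integral> k. indicator S k * h k \<partial>lborel)"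
proof -
  have pos_part: "e2ennreal (max 0 (ereal y)) = ennreal y" for y
    by (cases "0 \<le> y") (simp_all add: max_def ennreal_neg e2ennreal_neg)
  obtain r q where rq: "0 \<le> r" "0 \<le> q"
    "(\<integral>\<^sup>+x. ennreal (indicator S x * h x) \<partial>lborel) = ennreal r"
    "(\<integral>\<^sup>+x. ennreal (- (indicator S x * h x)) \<partial>lborel) = ennreal q"
    "(\<integral> k. indicator S k * h k \<partial>lborel) = r - q"
    by (rule integrableE[OF int]) blast
  have "(\<integral>\<^sup>+ x. e2ennreal (max 0 (F x)) * indicator S x \<partial>lborel) = ennreal r"
    unfolding rq(3)[symmetric]
    by (intro nn_integral_cong_AE, use eq in eventually_elim)
      (auto simp: pos_part indicator_def)
  moreover have "(\<integral>\<^sup>+ x. e2ennreal (max 0 (- F x)) * indicator S x \<partial>lborel) = ennreal q"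
    unfolding rq(4)[symmetric]
    by (intro nn_integral_cong_AE, use eq in eventually_elim)
      (auto simp: pos_part[of "- _", simplified] indicator_def)
  ultimately show ?thesis
    using rq(1,2) unfolding ext_set_integral_def rq(5) by simp
qed

lemma ext_set_integral_eq_minus_infinity:
  assumes "S \<in> sets lborel" "emeasure lborel S \<noteq> 0" "\<And>k. k \<in> S \<Longrightarrow> F k = - \<infinity>"
  shows "ext_set_integral S F = - \<infinity>"
proof -
  have "(\<integral>\<^sup>+ x. e2ennreal (max 0 (F x)) * indicator S x \<partial>lborel) = 0"
    using assms(3) by (subst nn_integral_cong[where v = "\<lambda>_. 0"]) (auto simp: indicator_def e2ennreal_neg)
  moreover have "(\<integral>\<^sup>+ x. e2ennreal (max 0 (- F x)) * indicator S x \<partial>lborel) = top * emeasure lborel S"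
    using assms(1,3) by (subst nn_integral_cmult_indicator[symmetric])
      (auto intro!: nn_integral_cong simp: indicator_def)
  ultimately show ?thesis
    using assms(2) by (simp add: ext_set_integral_def ennreal_top_mult zero_ennreal.rep_eq)
qed

definition brillouin_zone :: "(real \<times> real) set" where
  "brillouin_zone = {-pi..pi} \<times> {-pi..pi}"

lemma brillouin_zone_sets [measurable]: "brillouin_zone \<in> sets borel"
  unfolding brillouin_zone_def by (simp add: borel_closed closed_Times)

lemma indicator_brillouin_zone:
  "indicator brillouin_zone k = indicator {-pi..pi} (fst k) * (indicator {-pi..pi} (snd k) :: real)"
  by (simp add: brillouin_zone_def indicator_times)

lemma emeasure_brillouin_zone: "emeasure lborel brillouin_zone = ennreal ((2*pi)^2)"
proof -
  have "emeasure (lborel \<Otimes>\<^sub>M lborel) ({-pi..pi} \<times> {-pi..pi})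
      = emeasure lborel {-pi..pi::real} * emeasure lborel {-pi..pi::real}"
    by (rule lborel.emeasure_pair_measure_Times) auto
  then show ?thesis
    by (simp add: lborel_prod brillouin_zone_def ennreal_mult[symmetric] power2_eq_square)
qed

lemma integrable_brillouin_zone_const: "integrable lborel (\<lambda>k. indicator brillouin_zone k * (c::real))"
  by (intro integrable_mult_left integrable_real_indicator) (auto simp: emeasure_brillouin_zone)

lemma integral_brillouin_zone_const:
  "(\<integral> k. indicator brillouin_zone k * (c::real) \<partial>lborel) = c * (2*pi)^2"
  by (simp add: measure_def emeasure_brillouin_zone)

lemma integrable_abs_ln_sin_sq_fst_snd:
  shows "integrable lborel (\<lambda>k. indicator brillouin_zone k * \<bar>ln ((sin (fst k))^2)\<bar>)"
    and "integrable lborel (\<lambda>k. indicator brillouin_zone k * \<bar>ln ((sin (snd k))^2)\<bar>)"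
proof -
  have interval: "integrable lborel (indicator {-pi..pi} :: real \<Rightarrow> real)"
    by (rule integrable_real_indicator) auto
  show "integrable lborel (\<lambda>k. indicator brillouin_zone k * \<bar>ln ((sin (fst k))^2)\<bar>)"
    using lborel_pair.integrable_product_mult[OF integrable_abs_ln_sin_sq interval]
    by (simp add: lborel_prod indicator_brillouin_zone mult_ac)
  show "integrable lborel (\<lambda>k. indicator brillouin_zone k * \<bar>ln ((sin (snd k))^2)\<bar>)"
    using lborel_pair.integrable_product_mult[OF interval integrable_abs_ln_sin_sq]
    by (simp add: lborel_prod indicator_brillouin_zone mult_ac)
qed

definition ln_det_integral :: "real \<Rightarrow> real" where
  "ln_det_integral s =
    (\<integral> k. indicator brillouin_zone k * ln (det_reduced s ((sin (fst k))^2) ((sin (snd k))^2)) \<partial>lborel)"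

lemma integrable_ln_det_reduced:
  assumes "s \<in> {0..1}"
  shows "integrable lborel
    (\<lambda>k. indicator brillouin_zone k * ln (det_reduced s ((sin (fst k))^2) ((sin (snd k))^2)))"
proof (rule Bochner_Integration.integrable_bound)
  show "integrable lborel (\<lambda>k. indicator brillouin_zone k * 15
      + indicator brillouin_zone k * \<bar>ln ((sin (fst k))^2)\<bar>
      + indicator brillouin_zone k * \<bar>ln ((sin (snd k))^2)\<bar>)"
    by (intro Bochner_Integration.integrable_add integrable_brillouin_zone_const
        integrable_abs_ln_sin_sq_fst_snd)
  show "(\<lambda>k. indicator brillouin_zone k * ln (det_reduced s ((sin (fst k))^2) ((sin (snd k))^2)))
      \<in> borel_measurable lborel"
  proof -
    have [measurable]: "(\<lambda>k::real \<times> real. det_reduced s ((sin (fst k))^2) ((sin (snd k))^2))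
        \<in> borel_measurable borel"
      unfolding det_reduced_def by (intro borel_measurable_continuous_onI continuous_intros)
    show ?thesis by measurable
  qed
  show "AE k in lborel.
      norm (indicator brillouin_zone k * ln (det_reduced s ((sin (fst k))^2) ((sin (snd k))^2)))
    \<le> norm (indicator brillouin_zone k * 15 + indicator brillouin_zone k * \<bar>ln ((sin (fst k))^2)\<bar>
      + indicator brillouin_zone k * \<bar>ln ((sin (snd k))^2)\<bar>)"
    using abs_ln_det_reduced_le[OF assms] by (auto simp: indicator_def sin_sq_le_1)
qed

lemma ln_det_integral_increment:
  assumes "0 \<le> s" "s \<le> s'" "s' \<le> 1"
  shows "ln_det_integral s \<le> ln_det_integral s'"
    and "ln_det_integral s' \<le> ln_det_integral s + pi^2 * (s' - s)"
proof -
  let ?f = "\<lambda>s k. indicator brillouin_zone k * ln (det_reduced s ((sin (fst k))^2) ((sin (snd k))^2))"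
  have int: "integrable lborel (?f s)" "integrable lborel (?f s')"
    using assms by (auto intro!: integrable_ln_det_reduced)
  note incr = ln_det_reduced_increment[OF assms(1,2), of "(sin _)^2" "(sin _)^2", simplified sin_sq_le_1]
  show "ln_det_integral s \<le> ln_det_integral s'"
    unfolding ln_det_integral_def using int incr(1)
    by (intro integral_mono) (auto simp: indicator_def sin_sq_le_1)
  have "ln_det_integral s' \<le> (\<integral> k. ?f s k + indicator brillouin_zone k * ((s' - s) / 4) \<partial>lborel)"
    unfolding ln_det_integral_def using int incr(2)
    by (intro integral_mono Bochner_Integration.integrable_add integrable_brillouin_zone_const)
      (auto simp: indicator_def sin_sq_le_1)
  also have "\<dots> = ln_det_integral s + pi^2 * (s' - s)"
    unfolding ln_det_integral_def
    by (simp only: Bochner_Integration.integral_add[OF int(1) integrable_brillouin_zone_const]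
        integral_brillouin_zone_const) (simp add: power2_eq_square)
  finally show "ln_det_integral s' \<le> ln_det_integral s + pi^2 * (s' - s)" .
qed

lemma continuous_on_ln_det_integral: "continuous_on {0..1} ln_det_integral"
proof (rule lipschitz_on_continuous_on)
  show "(pi^2)-lipschitz_on {0..1} ln_det_integral"
  proof (rule lipschitz_onI)
    fix x y :: real
    assume "x \<in> {0..1}" "y \<in> {0..1}"
    then show "dist (ln_det_integral x) (ln_det_integral y) \<le> pi^2 * dist x y"
      using ln_det_integral_increment[of x y] ln_det_integral_increment[of y x]
      by (cases "x \<le> y") (auto simp: dist_real_def)
  qed simp
qed

lemma AE_sin_fst_nonzero: "AE k in (lborel :: (real \<times> real) measure). sin (fst k) \<noteq> 0"
proof -
  have ae: "AE x in lborel. sin x \<noteq> (0::real)"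
  proof (rule AE_I')
    show "range (\<lambda>i::int. real_of_int i * pi) \<in> null_sets lborel"
      by (intro countable_imp_null_set_lborel) simp
  qed (auto simp: sin_zero_iff_int2)
  have "AE k in lborel \<Otimes>\<^sub>M lborel. sin (fst k) \<noteq> (0::real)"
  proof (rule lborel_pair.AE_pair_measure)
    show "{k \<in> space (lborel \<Otimes>\<^sub>M lborel). sin (fst k) \<noteq> (0::real)} \<in> sets (lborel \<Otimes>\<^sub>M lborel)"
      by measurable
    show "AE x in lborel. AE y in lborel. sin (fst (x, y)) \<noteq> (0::real)"
      using ae by eventually_elim simp
  qed
  then show ?thesis
    unfolding lborel_prod .
qed

lemma ext_set_integral_logdetM:
  fixes \<theta> :: real
  defines "S \<equiv> (sin (2*\<theta>))^2"
  assumes "sin (2*\<theta>) \<noteq> 0"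
  shows "ext_set_integral brillouin_zone (\<lambda>k. logdetM k \<theta>) = ereal (ln S * (2*pi)^2 + ln_det_integral S)"
proof -
  have S: "0 < S" "S \<le> 1"
    using assms(2) by (simp_all add: S_def sin_sq_le_1)
  let ?D = "\<lambda>k. det_reduced S ((sin (fst k))^2) ((sin (snd k))^2)"
  have split: "(\<lambda>k. indicator brillouin_zone k * (ln S + ln (?D k)))
      = (\<lambda>k. indicator brillouin_zone k * ln S + indicator brillouin_zone k * ln (?D k))"
    by (simp add: distrib_left)
  have int: "integrable lborel (\<lambda>k. indicator brillouin_zone k * ln (?D k))"
    using S by (intro integrable_ln_det_reduced) simp
  have int_sum: "integrable lborel (\<lambda>k. indicator brillouin_zone k * (ln S + ln (?D k)))"
    unfolding split by (intro Bochner_Integration.integrable_add integrable_brillouin_zone_const int)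
  have "AE k in lborel. k \<in> brillouin_zone \<longrightarrow> logdetM k \<theta> = ereal (ln S + ln (?D k))"
    using AE_sin_fst_nonzero
  proof eventually_elim
    case (elim k)
    then have "0 < ?D k"
      using det_reduced_ge[of S] S by (smt (verit) zero_le_power2 zero_less_power2)
    then show ?case
      using S by (cases k) (simp add: logdetM_def det_Mmat S_def ln_mult)
  qed
  then have "ext_set_integral brillouin_zone (\<lambda>k. logdetM k \<theta>)
      = ereal (\<integral> k. indicator brillouin_zone k * (ln S + ln (?D k)) \<partial>lborel)"
    by (rule ext_set_integral_eq_integral[OF int_sum])
  also have "\<dots> = ereal (ln S * (2*pi)^2 + ln_det_integral S)"
    unfolding split Bochner_Integration.integral_add[OF integrable_brillouin_zone_const int]
      integral_brillouin_zone_const ln_det_integral_def ..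
  finally show ?thesis .
qed

definition Ffree_reduced :: "real \<Rightarrow> real \<Rightarrow> real \<Rightarrow> real" where
  "Ffree_reduced \<beta> J s = ln (\<beta> * J) / 2 + (ln s + ln_det_integral s / (2*pi)^2) / 8"

lemma Ffree_eq:
  "Ffree \<beta> J \<theta> = (if sin (2*\<theta>) = 0 then - \<infinity> else ereal (Ffree_reduced \<beta> J ((sin (2*\<theta>))^2)))"
proof (cases "sin (2*\<theta>) = 0")
  case True
  then have "ext_set_integral brillouin_zone (\<lambda>k. logdetM k \<theta>) = - \<infinity>"
    by (intro ext_set_integral_eq_minus_infinity)
      (auto simp: emeasure_brillouin_zone logdetM_def det_Mmat)
  then show ?thesis
    using True by (simp add: Ffree_def brillouin_zone_def[symmetric] divide_ereal_def)
next
  case False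
  then show ?thesis
    by (simp add: Ffree_def brillouin_zone_def[symmetric] ext_set_integral_logdetM
        Ffree_reduced_def field_simps)
qed

lemma Ffree_reduced_strict_mono:
  assumes "0 < s" "s < s'" "s' \<le> 1"
  shows "Ffree_reduced \<beta> J s < Ffree_reduced \<beta> J s'"
proof -
  have "ln s < ln s'"
    using assms by simp
  moreover have "ln_det_integral s / (2*pi)^2 \<le> ln_det_integral s' / (2*pi)^2"
    using ln_det_integral_increment(1)[of s s'] assms by (simp add: divide_right_mono)
  ultimately show ?thesis
    unfolding Ffree_reduced_def by simp
qed

lemma continuous_on_Ffree_reduced: "continuous_on {0<..1} (Ffree_reduced \<beta> J)"
  unfolding Ffree_reduced_def[abs_def]
  by (intro continuous_intros continuous_on_subset[OF continuous_on_ln_det_integral]) auto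

lemma sin_sq_double_pos:
  assumes "\<theta> \<in> {0<..<pi/2}"
  shows "0 < (sin (2 * \<theta>))^2"
proof -
  have "0 < sin (2 * \<theta>)"
    using assms by (intro sin_gt_zero) auto
  then show ?thesis by simp
qed

lemma continuous_on_Ffree: "continuous_on {0<..<pi/2} (Ffree \<beta> J)"
proof -
  have eq: "Ffree \<beta> J \<theta> = ereal (Ffree_reduced \<beta> J ((sin (2*\<theta>))^2))"
    if "\<theta> \<in> {0<..<pi/2}" for \<theta>
    using sin_sq_double_pos[OF that] by (simp add: Ffree_eq)
  have "continuous_on {0<..<pi/2} (\<lambda>\<theta>. (sin (2*\<theta>))^2)"
    by (intro continuous_intros)
  moreover have "(\<lambda>\<theta>. (sin (2*\<theta>))^2) ` {0<..<pi/2} \<subseteq> {0<..1}"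
    using sin_sq_double_pos by (auto simp: sin_sq_le_1)
  ultimately have "continuous_on {0<..<pi/2} (\<lambda>\<theta>. Ffree_reduced \<beta> J ((sin (2*\<theta>))^2))"
    by (rule continuous_on_compose2[OF continuous_on_Ffree_reduced])
  then have "continuous_on {0<..<pi/2} (\<lambda>\<theta>. ereal (Ffree_reduced \<beta> J ((sin (2*\<theta>))^2)))"
    by (rule continuous_on_ereal)
  then show ?thesis
    by (simp only: continuous_on_cong[OF refl eq])
qed

lemma strict_mono_on_Ffree: "strict_mono_on {0<..<pi/4} (Ffree \<beta> J)"
proof (rule strict_mono_onI)
  fix r s :: real
  assume rs: "r \<in> {0<..<pi/4}" "s \<in> {0<..<pi/4}" "r < s"
  have pos: "0 < (sin (2 * r))^2" "0 < (sin (2 * s))^2" "0 < sin (2 * r)"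
    using rs sin_sq_double_pos[of r] sin_sq_double_pos[of s] by (auto intro: sin_gt_zero)
  have "sin (2 * r) < sin (2 * s)"
    using rs by (intro sin_monotone_2pi) auto
  then have "(sin (2 * r))^2 < (sin (2 * s))^2"
    using pos by (intro power_strict_mono) auto
  then show "Ffree \<beta> J r < Ffree \<beta> J s"
    using pos by (simp add: Ffree_eq Ffree_reduced_strict_mono sin_sq_le_1)
qed

lemma Ffree_reflect: "Ffree \<beta> J (pi/2 - \<theta>) = Ffree \<beta> J \<theta>"
proof -
  have "sin (2 * (pi/2 - \<theta>)) = sin (2*\<theta>)"
    by (simp add: right_diff_distrib)
  then show ?thesis
    by (simp add: Ffree_eq)
qed

lemma Ffree_shift: "Ffree \<beta> J (\<theta> + pi/2) = Ffree \<beta> J \<theta>"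
proof -
  have "sin (2 * (\<theta> + pi/2)) = - sin (2*\<theta>)"
    by (simp add: distrib_left sin_periodic_pi)
  then show ?thesis
    by (simp add: Ffree_eq)
qed

lemma strict_antimono_on_Ffree: "strict_antimono_on {pi/4<..<pi/2} (Ffree \<beta> J)"
proof (rule monotone_onI)
  fix r s :: real
  assume "r \<in> {pi/4<..<pi/2}" "s \<in> {pi/4<..<pi/2}" "r < s"
  then have "Ffree \<beta> J (pi/2 - s) < Ffree \<beta> J (pi/2 - r)"
    by (intro strict_mono_onD[OF strict_mono_on_Ffree]) auto
  then show "Ffree \<beta> J s < Ffree \<beta> J r"
    by (simp add: Ffree_reflect)
qed

lemma sin_double_eq_0_iff:
  assumes "0 \<le> \<theta>" "\<theta> < 2*pi"
  shows "sin (2*\<theta>) = 0 \<longleftrightarrow> \<theta> \<in> {0, pi/2, pi, 3*pi/2}"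
proof
  assume "sin (2*\<theta>) = 0"
  then obtain i :: int where i: "2*\<theta> = of_int i * pi"
    by (auto simp: sin_zero_iff_int2)
  with assms have "0 \<le> of_int i * pi" "of_int i * pi < 4 * pi"
    by linarith+
  then have "0 \<le> i" "i < 4"
    using pi_gt_zero by (auto simp: zero_le_mult_iff)
  then have "i \<in> {0, 1, 2, 3}"
    by auto
  then show "\<theta> \<in> {0, pi/2, pi, 3*pi/2}"
    using i by auto
next
  assume "\<theta> \<in> {0, pi/2, pi, 3*pi/2}"
  then have "2*\<theta> \<in> {of_int i * pi | i. i \<in> {0, 1, 2, 3}}"
    by force
  then show "sin (2*\<theta>) = 0"
    by (auto simp: sin_zero_iff_int2)
qed

theorem proposition4p2:
  fixes \<beta> J :: real
  assumes "\<beta> > 0" and "J > 0"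
  shows "(\<forall>k1 \<in> {-pi..pi}. \<forall>k2 \<in> {-pi..pi}. \<forall>\<theta> \<in> {0..2*pi}.
            Im (det (Mmat (k1, k2) \<theta>)) = 0 \<and>
            (sin (2*\<theta>))^2 * (sin k1)^2 * (sin k2)^2 \<le> Re (det (Mmat (k1, k2) \<theta>)) \<and>
            Re (det (Mmat (k1, k2) \<theta>)) \<le> 16 * (sin (2*\<theta>))^2)
       \<and> (\<forall>\<theta>. sin (2*\<theta>) \<noteq> 0 \<longrightarrow> \<bar>Ffree \<beta> J \<theta>\<bar> \<noteq> \<infinity>)
       \<and> (\<forall>\<theta>. Ffree \<beta> J (\<theta> + pi/2) = Ffree \<beta> J \<theta>)
       \<and> (\<forall>\<theta>. Ffree \<beta> J \<theta> = Ffree \<beta> J (pi/2 - \<theta>))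
       \<and> continuous_on {0<..<pi/2} (Ffree \<beta> J)
       \<and> strict_mono_on {0<..<pi/4} (Ffree \<beta> J)
       \<and> strict_antimono_on {pi/4<..<pi/2} (Ffree \<beta> J)
       \<and> (INF \<theta>. Ffree \<beta> J \<theta>) = - \<infinity>
       \<and> (\<forall>\<theta> \<in> {0..<2*pi}. Ffree \<beta> J \<theta> = - \<infinity> \<longleftrightarrow> \<theta> \<in> {0, pi/2, pi, 3*pi/2})"
proof (intro conjI ballI allI impI)
  show "\<bar>Ffree \<beta> J \<theta>\<bar> \<noteq> \<infinity>" if "sin (2*\<theta>) \<noteq> 0" for \<theta>
    using that by (simp add: Ffree_eq)
  have "Ffree \<beta> J 0 = - \<infinity>"
    by (simp add: Ffree_eq)
  then show "(INF \<theta>. Ffree \<beta> J \<theta>) = - \<infinity>"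
    by (metis INF_lower UNIV_I ereal_infty_less_eq(2))
  show "Ffree \<beta> J \<theta> = - \<infinity> \<longleftrightarrow> \<theta> \<in> {0, pi/2, pi, 3*pi/2}" if "\<theta> \<in> {0..<2*pi}" for \<theta>
    using sin_double_eq_0_iff[of \<theta>] that by (simp add: Ffree_eq)
qed (simp_all add: det_Mmat_bounds Ffree_shift Ffree_reflect continuous_on_Ffree
    strict_mono_on_Ffree strict_antimono_on_Ffree)

end
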